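(* Let $(n_0^{(m)},n_1^{(m)})_{m\ge 1}$ be a sequence of pairs of integers with $2\le n_0^{(m)}\le n_1^{(m)}$, $n_1^{(m)}\to\infty$, and $n_0^{(m)}=(\log n_1^{(m)})^{\omega(1)}$, i.e. $\frac{\log n_0^{(m)}}{\log\log n_1^{(m)}}\to\infty$ as $m\to\infty$. Writing $n_0=n_0^{(m)}$, $n_1=n_1^{(m)}$, let $k=\frac{\log n_1}{\log n_0}$ and let $x_0$ be the unique root of the equation $x-1-x^{\frac{k-1}{k}}=0$ in the interval $[1,\infty)$. Then $$ch(K_{n_0,n_1})=(1+o(1))\frac{\log n_1}{\log x_0},$$ i.e. $ch(K_{n_0,n_1})\big/\frac{\log n_1}{\log x_0}\to 1$ as $m\to\infty$.
   Context: All logarithms are to base 2. For a graph $G=(V,E)$, the choice number $ch(G)$ is the minimum integer $k$ such that for every assignment of a list $S(v)$ of at least $k$ colors to each vertex $v\in V$, there is a proper vertex coloring of $G$ assigning to each vertex $v$ a color from $S(v)$. $K_{n_0,n_1}$ denotes the complete bipartite graph with parts of sizes $n_0$ and $n_1$. *)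

theory Defs
  imports Complex_Main
begin

definition choosable :: "'v set \<Rightarrow> ('v \<Rightarrow> 'v \<Rightarrow> bool) \<Rightarrow> nat \<Rightarrow> bool" where
  "choosable V E k \<longleftrightarrow>
     (\<forall>S :: 'v \<Rightarrow> nat set. (\<forall>v\<in>V. finite (S v) \<and> k \<le> card (S v)) \<longrightarrow>
        (\<exists>c :: 'v \<Rightarrow> nat. (\<forall>v\<in>V. c v \<in> S v) \<and>
                         (\<forall>u\<in>V. \<forall>v\<in>V. E u v \<longrightarrow> c u \<noteq> c v)))"

definition choice_number :: "'v set \<Rightarrow> ('v \<Rightarrow> 'v \<Rightarrow> bool) \<Rightarrow> nat" where
  "choice_number V E = (LEAST k. choosable V E k)"

definition Kbip_V :: "nat \<Rightarrow> nat \<Rightarrow> (nat + nat) set" where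
  "Kbip_V n0 n1 = Inl ` {..<n0} \<union> Inr ` {..<n1}"

definition Kbip_E :: "(nat + nat) \<Rightarrow> (nat + nat) \<Rightarrow> bool" where
  "Kbip_E u v \<longleftrightarrow> (isl u \<noteq> isl v)"

definition ch_Kbip :: "nat \<Rightarrow> nat \<Rightarrow> nat" where
  "ch_Kbip n0 n1 = choice_number (Kbip_V n0 n1) Kbip_E"

definition root_x0 :: "real \<Rightarrow> real" where
  "root_x0 k = (THE x. 1 \<le> x \<and> x - 1 - x powr ((k - 1) / k) = 0)"

end

theory Submission
  imports Defs "HOL-Library.FuncSet"
begin

(* Put L = log n1, l = log n0, k = L / l, x = x0 and p = 1 / x. The equation defining x0 says
   1 - p = x^(-1/k), so n1 p^s = 2^(L - s log x) and n0 (1 - p)^s = 2^(l - s log x / k). Both are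
   at most n0^(-e) if s >= (1 + e) L / log x, and at least n0^(e/2) if s <= (1 - e) L / log x.

   A list assignment of K_{n0,n1} is colourable iff some colour set A (the colours used on the
   left) meets every left list and contains no right list.

   Upper bound: a random A containing each colour independently with probability p misses a
   fixed left list with probability (1 - p)^s and contains a fixed right list with probability
   p^s, so by the union bound some A works.

   Lower bound: give every vertex a random s-subset of N colours, N polynomial in L. For every a,
   one of n0 C(N - a, s) / C(N, s) and n1 C(a, s) / C(N, s) is at least 2 N, so a fixed A of size
   a works with probability below 2^(-N); the union bound over the 2^N sets A leaves a list
   assignment without colouring. Making 2 N <= n0^(e/2) is where log n0 / log log n1 -> infinity
   is needed. *)

lemma root_x0_equation_iff:
  fixes k x :: real
  assumes "0 < k" "0 < x"
  shows "x - 1 - x powr ((k - 1) / k) = 0 \<longleftrightarrow> x powr (-1 / k) = 1 - 1 / x"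
proof -
  have "x powr ((k - 1) / k) = x powr (1 + -1 / k)"
    using assms by (simp add: diff_divide_distrib)
  also have "\<dots> = x * x powr (-1 / k)"
    unfolding powr_add using assms by simp
  finally have "x powr ((k - 1) / k) = x * x powr (-1 / k)" .
  then show ?thesis
    using assms by (auto simp: field_simps)
qed

lemma root_x0_equation_unique:
  fixes k :: real
  assumes k: "1 \<le> k"
  shows "\<exists>!x. 1 \<le> x \<and> x - 1 - x powr ((k - 1) / k) = 0"
proof -
  define f where "f x = x - 1 - x powr ((k - 1) / k)" for x :: real
  have "(2 powr k) powr ((k - 1) / k) = 2 powr (k - 1)"
    using k by (simp add: powr_powr)
  then have "f (2 powr k) = 2 powr (k - 1) - 1"
    using k by (simp add: f_def powr_diff)
  then have "0 \<le> f (2 powr k)" "1 \<le> (2::real) powr k"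
    using k by (simp_all add: ge_one_powr_ge_zero)
  moreover have "continuous_on {1..2 powr k} f"
    unfolding f_def by (intro continuous_intros) auto
  ultimately obtain x where x: "1 \<le> x" "f x = 0"
    using IVT'[of f 1 0 "2 powr k"] by (auto simp: f_def)
  have no_two_roots: False if "1 \<le> z" "z < w" "f z = 0" "f w = 0" for z w
  proof -
    have "z powr (-1 / k) = 1 - 1 / z" "w powr (-1 / k) = 1 - 1 / w"
      using that k root_x0_equation_iff[of k z] root_x0_equation_iff[of k w]
      by (simp_all add: f_def)
    moreover have "w powr (-1 / k) < z powr (-1 / k)"
      using that k by (intro powr_less_mono2_neg) auto
    moreover have "1 / w < 1 / z"
      using that by (simp add: frac_less2)
    ultimately show False by linarith
  qed
  have "z = x" if "1 \<le> z" "f z = 0" for z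
    using no_two_roots[of z x] no_two_roots[of x z] that x
    by (cases z x rule: linorder_cases) auto
  with x show ?thesis
    unfolding f_def by blast
qed

lemma root_x0_equation:
  fixes k :: real
  assumes "1 \<le> k"
  shows "1 \<le> root_x0 k" "root_x0 k - 1 - root_x0 k powr ((k - 1) / k) = 0"
  using theI'[OF root_x0_equation_unique[OF assms]] unfolding root_x0_def by blast+

lemma root_x0_bounds:
  fixes k :: real
  assumes k: "1 \<le> k"
  defines "x \<equiv> root_x0 k"
  shows "2 \<le> x" "x powr (-1 / k) = 1 - 1 / x" "log 2 x \<le> k" "x \<le> 3 * k"
proof -
  have "1 \<le> x powr ((k - 1) / k)"
    using root_x0_equation(1)[OF k] k unfolding x_def by (intro ge_one_powr_ge_zero) auto
  then show x2: "2 \<le> x"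
    using root_x0_equation(2)[OF k] by (simp add: x_def)
  show x_powr: "x powr (-1 / k) = 1 - 1 / x"
    using root_x0_equation[OF k] k root_x0_equation_iff[of k x] by (simp add: x_def)
  have "x powr (1 / k) * x powr (-1 / k) = 1"
    using x2 by (simp flip: powr_add)
  then have x_powr': "x powr (1 / k) = 1 + 1 / (x - 1)"
    using x2 unfolding x_powr by (simp add: field_simps)
  have "log 2 x / k = log 2 (1 + 1 / (x - 1))"
    using x2 by (simp add: log_powr flip: x_powr')
  also have "\<dots> \<le> log 2 2"
    using x2 by (subst log_le_cancel_iff) (auto simp: field_simps)
  finally show "log 2 x \<le> k"
    using k by (simp add: field_simps)
  have "ln x / k = ln (1 + 1 / (x - 1))"
    using x2 by (simp flip: x_powr')
  also have "\<dots> \<le> 1 / (x - 1)"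
    using x2 by (intro ln_add_one_self_le_self) simp
  finally have "ln x * (x - 1) \<le> k"
    using x2 k by (simp add: field_simps)
  moreover have "1 / 2 \<le> ln x"
  proof -
    have "1 - 1 / x \<le> ln x"
      using ln_le_minus_one[of "1 / x"] x2 by (simp add: ln_div)
    moreover have "1 / 2 \<le> 1 - 1 / x"
      using x2 by (simp add: field_simps)
    ultimately show ?thesis by linarith
  qed
  ultimately have "(x - 1) / 2 \<le> k"
    using x2 mult_right_mono[of "1 / 2" "ln x" "x - 1"] by linarith
  then show "x \<le> 3 * k"
    using k by simp
qed

definition list_colouring :: "'v set \<Rightarrow> ('v \<Rightarrow> 'v \<Rightarrow> bool) \<Rightarrow> ('v \<Rightarrow> nat set) \<Rightarrow> ('v \<Rightarrow> nat) \<Rightarrow> bool" where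
  "list_colouring V E S c \<longleftrightarrow> (\<forall>v\<in>V. c v \<in> S v) \<and> (\<forall>u\<in>V. \<forall>v\<in>V. E u v \<longrightarrow> c u \<noteq> c v)"

lemma choosable_iff_list_colouring:
  "choosable V E k \<longleftrightarrow>
     (\<forall>S. (\<forall>v\<in>V. finite (S v) \<and> k \<le> card (S v)) \<longrightarrow> (\<exists>c. list_colouring V E S c))"
  unfolding choosable_def list_colouring_def ..

lemma choosable_mono: "choosable V E k \<Longrightarrow> k \<le> k' \<Longrightarrow> choosable V E k'"
  unfolding choosable_iff_list_colouring by (meson order_trans)

lemma choice_number_le: "choosable V E k \<Longrightarrow> choice_number V E \<le> k"
  unfolding choice_number_def by (rule Least_le)

lemma less_choice_number:
  assumes "\<not> choosable V E k" "choosable V E k'"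
  shows "k < choice_number V E"
proof -
  have "choosable V E (choice_number V E)"
    unfolding choice_number_def using assms(2) by (rule LeastI)
  then show ?thesis
    using assms(1) choosable_mono by (metis not_less)
qed

definition Kbip_separates :: "nat \<Rightarrow> nat \<Rightarrow> 'c set \<Rightarrow> (nat + nat \<Rightarrow> 'c set) \<Rightarrow> bool" where
  "Kbip_separates n0 n1 A S \<longleftrightarrow> (\<forall>i<n0. S (Inl i) \<inter> A \<noteq> {}) \<and> (\<forall>j<n1. \<not> S (Inr j) \<subseteq> A)"

lemma Kbip_list_colouring_iff:
  "(\<exists>c. list_colouring (Kbip_V n0 n1) Kbip_E S c) \<longleftrightarrow>
     (\<exists>A. Kbip_separates n0 n1 A S)"
proof
  assume "\<exists>c. list_colouring (Kbip_V n0 n1) Kbip_E S c"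
  then obtain c where c: "list_colouring (Kbip_V n0 n1) Kbip_E S c" ..
  define A where "A = c ` Inl ` {..<n0}"
  have "c (Inr j) \<notin> A" if "j < n1" for j
    using c that unfolding A_def list_colouring_def Kbip_V_def Kbip_E_def by fastforce
  then have "\<not> S (Inr j) \<subseteq> A" if "j < n1" for j
    using c that unfolding list_colouring_def Kbip_V_def by blast
  moreover have "S (Inl i) \<inter> A \<noteq> {}" if "i < n0" for i
    using c that unfolding A_def list_colouring_def Kbip_V_def by blast
  ultimately have "Kbip_separates n0 n1 A S"
    unfolding Kbip_separates_def by blast
  then show "\<exists>A. Kbip_separates n0 n1 A S"
    by (rule exI)
next
  assume "\<exists>A. Kbip_separates n0 n1 A S"
  then obtain A where "Kbip_separates n0 n1 A S" ..
  then have A: "\<forall>i<n0. S (Inl i) \<inter> A \<noteq> {}" "\<forall>j<n1. \<not> S (Inr j) \<subseteq> A"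
    unfolding Kbip_separates_def by blast+
  define c where "c v = (if isl v then SOME a. a \<in> S v \<inter> A else SOME a. a \<in> S v - A)" for v
  have left: "c (Inl i) \<in> S (Inl i) \<inter> A" if "i < n0" for i
    using A(1) that some_in_eq[of "S (Inl i) \<inter> A"] unfolding c_def by simp
  have right: "c (Inr j) \<in> S (Inr j) - A" if "j < n1" for j
    using A(2) that some_in_eq[of "S (Inr j) - A"] unfolding c_def by simp
  have "list_colouring (Kbip_V n0 n1) Kbip_E S c"
    unfolding list_colouring_def Kbip_V_def Kbip_E_def
    using left right by (fastforce simp: isl_def split: sum.splits)
  then show "\<exists>c. list_colouring (Kbip_V n0 n1) Kbip_E S c" by blast
qed

(* p ^ card B * (1 - p) ^ card (P - B) is the probability that a random subset of P,
   containing each element independently with probability p, equals B. *)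

lemma sum_Pow_weight_Int_eq:
  fixes p :: real
  assumes finite_P: "finite P" and "T \<subseteq> P" "U \<subseteq> T"
  shows "(\<Sum>B\<in>Pow P. if B \<inter> T = U then p ^ card B * (1 - p) ^ card (P - B) else 0)
           = p ^ card U * (1 - p) ^ card (T - U)"
proof -
  define f where "f x = (if x \<in> T - U then 0 else p)" for x
  define g where "g x = (if x \<in> U then 0 else 1 - p)" for x
  have summand: "(\<Prod>x\<in>B. f x) * (\<Prod>x\<in>P - B. g x)
      = (if B \<inter> T = U then p ^ card B * (1 - p) ^ card (P - B) else 0)" if "B \<subseteq> P" for B
  proof (cases "B \<inter> T = U")
    case True
    then have "(\<Prod>x\<in>B. f x) = p ^ card B" "(\<Prod>x\<in>P - B. g x) = (1 - p) ^ card (P - B)"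
      by (auto simp: f_def g_def)
    with True show ?thesis by simp
  next
    case False
    have "finite B"
      using that finite_P finite_subset by blast
    from False assms(2,3) have "(\<exists>x\<in>B. x \<in> T - U) \<or> (\<exists>x\<in>P - B. x \<in> U)"
      by blast
    with False show ?thesis
      using \<open>finite B\<close> finite_P by (auto simp: f_def g_def)
  qed
  have "(\<Sum>B\<in>Pow P. if B \<inter> T = U then p ^ card B * (1 - p) ^ card (P - B) else 0)
      = (\<Sum>B\<in>Pow P. (\<Prod>x\<in>B. f x) * (\<Prod>x\<in>P - B. g x))"
    by (intro sum.cong) (simp_all add: summand)
  also have "\<dots> = (\<Prod>x\<in>P. f x + g x)"
    by (rule prod_add[OF finite_P, symmetric])
  also have "\<dots> = (\<Prod>x\<in>T. f x + g x)"
    using assms by (intro prod.mono_neutral_right) (auto simp: f_def g_def)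
  also have "\<dots> = (\<Prod>x\<in>T - U. f x + g x) * (\<Prod>x\<in>U. f x + g x)"
    using assms by (intro prod.subset_diff) (auto intro: finite_subset)
  also have "\<dots> = p ^ card U * (1 - p) ^ card (T - U)"
    by (auto simp: f_def g_def)
  finally show ?thesis .
qed

lemma weight_le_if_not_Kbip_separates:
  fixes w :: real
  assumes "0 \<le> w" "\<not> Kbip_separates n0 n1 B S"
  shows "w \<le> (\<Sum>i<n0. if B \<inter> S (Inl i) = {} then w else 0)
              + (\<Sum>j<n1. if B \<inter> S (Inr j) = S (Inr j) then w else 0)"
    (is "_ \<le> ?left + ?right")
proof -
  have "0 \<le> ?left" "0 \<le> ?right"
    using assms(1) by (auto intro: sum_nonneg)
  from assms(2) consider i where "i < n0" "B \<inter> S (Inl i) = {}"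
    | j where "j < n1" "B \<inter> S (Inr j) = S (Inr j)"
    unfolding Kbip_separates_def by blast
  then show ?thesis
  proof cases
    case (1 i)
    then have "w \<le> ?left"
      using assms(1) member_le_sum[of i "{..<n0}" "\<lambda>i. if B \<inter> S (Inl i) = {} then w else 0"] by auto
    with \<open>0 \<le> ?right\<close> show ?thesis by linarith
  next
    case (2 j)
    then have "w \<le> ?right"
      using assms(1) member_le_sum[of j "{..<n1}" "\<lambda>j. if B \<inter> S (Inr j) = S (Inr j) then w else 0"] by auto
    with \<open>0 \<le> ?left\<close> show ?thesis by linarith
  qed
qed

lemma exists_Kbip_separating_set:
  fixes p :: real
  assumes p: "0 < p" "p < 1"
    and S: "\<forall>v\<in>Kbip_V n0 n1. finite (S v) \<and> s \<le> card (S v)"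
    and small: "real n0 * (1 - p) ^ s + real n1 * p ^ s < 1"
  shows "\<exists>A. Kbip_separates n0 n1 A S"
proof (rule ccontr)
  assume no_sep: "\<nexists>A. Kbip_separates n0 n1 A S"
  define P where "P = (\<Union>v\<in>Kbip_V n0 n1. S v)"
  define w where "w B = p ^ card B * (1 - p) ^ card (P - B)" for B
  have finite_P: "finite P"
    using S unfolding P_def Kbip_V_def by auto
  have "S (Inl i) \<subseteq> P" if "i < n0" for i
    using that unfolding P_def Kbip_V_def by auto
  moreover have "S (Inr j) \<subseteq> P" if "j < n1" for j
    using that unfolding P_def Kbip_V_def by auto
  ultimately have weight_sums:
    "i < n0 \<Longrightarrow> (\<Sum>B\<in>Pow P. if B \<inter> S (Inl i) = {} then w B else 0) = (1 - p) ^ card (S (Inl i))"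
    "j < n1 \<Longrightarrow> (\<Sum>B\<in>Pow P. if B \<inter> S (Inr j) = S (Inr j) then w B else 0) = p ^ card (S (Inr j))"
    for i j
    using sum_Pow_weight_Int_eq[OF finite_P] unfolding w_def by simp_all
  have union_bound: "w B \<le> (\<Sum>i<n0. if B \<inter> S (Inl i) = {} then w B else 0)
                          + (\<Sum>j<n1. if B \<inter> S (Inr j) = S (Inr j) then w B else 0)" for B
    using p no_sep by (intro weight_le_if_not_Kbip_separates) (auto simp: w_def)
  have "1 = (\<Sum>B\<in>Pow P. w B)"
    using sum_Pow_weight_Int_eq[OF finite_P, of "{}" "{}" p] by (simp add: w_def)
  also have "\<dots> \<le> (\<Sum>i<n0. \<Sum>B\<in>Pow P. if B \<inter> S (Inl i) = {} then w B else 0)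
                 + (\<Sum>j<n1. \<Sum>B\<in>Pow P. if B \<inter> S (Inr j) = S (Inr j) then w B else 0)"
    using sum_mono[of "Pow P", OF union_bound] by (simp add: sum.distrib sum.swap[of _ "Pow P"])
  also have "\<dots> = (\<Sum>i<n0. (1 - p) ^ card (S (Inl i))) + (\<Sum>j<n1. p ^ card (S (Inr j)))"
    by (simp add: weight_sums)
  also have "\<dots> \<le> (\<Sum>i<n0. (1 - p) ^ s) + (\<Sum>j<n1. p ^ s)"
    using S p unfolding Kbip_V_def by (intro add_mono sum_mono power_decreasing) auto
  finally show False
    using small by simp
qed

lemma choosable_KbipI:
  fixes p :: real
  assumes "0 < p" "p < 1" "real n0 * (1 - p) ^ s + real n1 * p ^ s < 1"
  shows "choosable (Kbip_V n0 n1) Kbip_E s"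
  unfolding choosable_iff_list_colouring Kbip_list_colouring_iff
  using exists_Kbip_separating_set[OF assms(1,2) _ assms(3)] by blast

lemma card_subsets_meeting:
  assumes "finite C" "A \<subseteq> C"
  shows "card {X. X \<subseteq> C \<and> card X = s \<and> X \<inter> A \<noteq> {}} = (card C choose s) - ((card C - card A) choose s)"
proof -
  have "{X. X \<subseteq> C \<and> card X = s \<and> X \<inter> A \<noteq> {}}
      = {X. X \<subseteq> C \<and> card X = s} - {X. X \<subseteq> C - A \<and> card X = s}"
    by blast
  also have "card \<dots> = card {X. X \<subseteq> C \<and> card X = s} - card {X. X \<subseteq> C - A \<and> card X = s}"
    using assms(1) by (intro card_Diff_subset) (auto intro: finite_subset[of _ "Pow C"])
  also have "\<dots> = (card C choose s) - ((card C - card A) choose s)"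
    using assms by (simp add: n_subsets card_Diff_subset finite_subset)
  finally show ?thesis .
qed

lemma card_subsets_not_subset:
  assumes "finite C" "A \<subseteq> C"
  shows "card {X. X \<subseteq> C \<and> card X = s \<and> \<not> X \<subseteq> A} = (card C choose s) - (card A choose s)"
proof -
  have "{X. X \<subseteq> C \<and> card X = s \<and> \<not> X \<subseteq> A} = {X. X \<subseteq> C \<and> card X = s} - {X. X \<subseteq> A \<and> card X = s}"
    using assms by blast
  also have "card \<dots> = card {X. X \<subseteq> C \<and> card X = s} - card {X. X \<subseteq> A \<and> card X = s}"
    using assms by (intro card_Diff_subset) (auto intro: finite_subset[of _ "Pow C"])
  also have "\<dots> = (card C choose s) - (card A choose s)"
    using assms by (simp add: n_subsets finite_subset)
  finally show ?thesis .
qed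

lemma power_diff_times_2_power_less:
  fixes M u n N :: nat
  assumes "u \<le> M" "1 \<le> N" "2 * real N \<le> real n * real u / real M"
  shows "real ((M - u) ^ n) * 2 ^ N < real M ^ n"
proof -
  have M: "0 < M"
    using assms by (cases "M = 0") auto
  have "(1 - real u / real M) ^ n \<le> exp (- (real u / real M)) ^ n"
    using assms M exp_ge_add_one_self[of "- (real u / real M)"] by (intro power_mono) auto
  also have "\<dots> = exp (- (real n * real u / real M))"
    by (simp flip: exp_of_nat_mult)
  also have "\<dots> \<le> exp (- (2 * real N))"
    using assms(3) by simp
  finally have ratio: "(1 - real u / real M) ^ n \<le> exp (- (2 * real N))" .
  have "(2::real) ^ N \<le> exp 1 ^ N"
    using exp_ge_add_one_self[of 1] by (intro power_mono) auto
  then have two_power: "(2::real) ^ N \<le> exp (real N)"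
    by (simp flip: exp_of_nat_mult)
  have "real ((M - u) ^ n) = real M ^ n * (1 - real u / real M) ^ n"
    using assms M by (simp add: field_simps flip: power_mult_distrib)
  also have "\<dots> * 2 ^ N \<le> real M ^ n * exp (- (2 * real N)) * exp (real N)"
    using ratio two_power by (intro mult_mono mult_left_mono) auto
  also have "\<dots> = real M ^ n * exp (- real N)"
    by (simp add: mult.assoc flip: exp_add)
  also have "\<dots> < real M ^ n"
    using assms M by simp
  finally show ?thesis .
qed

lemma binomial_ratio_ge_power:
  fixes b s N :: nat and q :: real
  assumes "b \<le> N" "0 < N" "0 \<le> q" "q \<le> (real b - real s) / real N"
  shows "q ^ s \<le> real (b choose s) / real (N choose s)"
proof -
  have "0 \<le> (real b - real s) / real N"
    using assms(3,4) by linarith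
  then have "s \<le> b"
    using assms(2) by (simp add: zero_le_divide_iff)
  have "q ^ s * real (N choose s) \<le> ((real b - real s) / real N) ^ s * real (N choose s)"
    using assms \<open>s \<le> b\<close> by (intro mult_right_mono power_mono) auto
  also have "\<dots> = (\<Prod>i = 0..<s. (real b - real s) / real N * (real (N - i) / real (s - i)))"
    using \<open>s \<le> b\<close> assms(1)
    by (simp only: binomial_altdef_of_nat prod.distrib prod_constant card_atLeastLessThan diff_zero)
  also have "\<dots> \<le> (\<Prod>i = 0..<s. real (b - i) / real (s - i))"
  proof (intro prod_mono conjI)
    fix i assume "i \<in> {0..<s}"
    then have i: "i < s" by simp
    have "(real b - real s) * real (N - i) \<le> (real b - real s) * real N"
      using assms \<open>s \<le> b\<close> by (intro mult_left_mono) auto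
    also have "\<dots> \<le> real (b - i) * real N"
      using assms \<open>s \<le> b\<close> i by (intro mult_right_mono) auto
    finally have "(real b - real s) / real N * real (N - i) \<le> real (b - i)"
      using assms(2) by (simp add: field_simps)
    then show "(real b - real s) / real N * (real (N - i) / real (s - i)) \<le> real (b - i) / real (s - i)"
      using divide_right_mono[of "(real b - real s) / real N * real (N - i)" "real (b - i)" "real (s - i)"]
      by (simp del: of_nat_diff)
    show "0 \<le> (real b - real s) / real N * (real (N - i) / real (s - i))"
      using assms \<open>s \<le> b\<close> by auto
  qed
  also have "\<dots> = real (b choose s)"
    using binomial_altdef_of_nat[OF \<open>s \<le> b\<close>, where 'a=real] by simp
  finally show ?thesis
    using assms \<open>s \<le> b\<close> by (simp add: field_simps)
qed

lemma power_diff_product_times_2_power_less: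
  fixes M u0 u1 n0 n1 N :: nat
  assumes "u0 \<le> M" "u1 \<le> M" "1 \<le> N"
    and "2 * real N \<le> real n0 * real u0 / real M \<or> 2 * real N \<le> real n1 * real u1 / real M"
  shows "real ((M - u0) ^ n0) * real ((M - u1) ^ n1) * 2 ^ N < real M ^ n0 * real M ^ n1"
proof -
  have M: "0 < M"
    using assms by (cases "M = 0") auto
  have le: "real ((M - u) ^ n) \<le> real M ^ n" for u n
    by (simp add: power_mono)
  from assms(4) show ?thesis
  proof
    assume "2 * real N \<le> real n0 * real u0 / real M"
    then have "real ((M - u0) ^ n0) * 2 ^ N < real M ^ n0"
      using assms by (intro power_diff_times_2_power_less) auto
    have "real ((M - u0) ^ n0) * real ((M - u1) ^ n1) * 2 ^ N
        = real ((M - u0) ^ n0) * 2 ^ N * real ((M - u1) ^ n1)"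
      by (simp add: mult_ac)
    also have "\<dots> \<le> real ((M - u0) ^ n0) * 2 ^ N * real M ^ n1"
      using le by (intro mult_left_mono) auto
    also have "\<dots> < real M ^ n0 * real M ^ n1"
      using \<open>real ((M - u0) ^ n0) * 2 ^ N < real M ^ n0\<close> M by (intro mult_strict_right_mono) auto
    finally show ?thesis .
  next
    assume "2 * real N \<le> real n1 * real u1 / real M"
    then have "real ((M - u1) ^ n1) * 2 ^ N < real M ^ n1"
      using assms by (intro power_diff_times_2_power_less) auto
    have "real ((M - u0) ^ n0) * real ((M - u1) ^ n1) * 2 ^ N
        = real ((M - u0) ^ n0) * (real ((M - u1) ^ n1) * 2 ^ N)"
      by (simp add: mult_ac)
    also have "\<dots> \<le> real M ^ n0 * (real ((M - u1) ^ n1) * 2 ^ N)"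
      using le by (intro mult_right_mono) auto
    also have "\<dots> < real M ^ n0 * real M ^ n1"
      using \<open>real ((M - u1) ^ n1) * 2 ^ N < real M ^ n1\<close> M by (intro mult_strict_left_mono) auto
    finally show ?thesis .
  qed
qed

lemma prod_Kbip_V: "(\<Prod>v\<in>Kbip_V n0 n1. f v) = (\<Prod>i<n0. f (Inl i)) * (\<Prod>j<n1. f (Inr j))"
  unfolding Kbip_V_def by (subst prod.union_disjoint) (auto simp: prod.reindex)

lemma finite_Kbip_V: "finite (Kbip_V n0 n1)"
  by (simp add: Kbip_V_def)

lemma card_Kbip_V: "card (Kbip_V n0 n1) = n0 + n1"
  unfolding Kbip_V_def by (subst card_Un_disjoint) (auto simp: card_image)

lemma card_Kbip_lists_separated:
  fixes A :: "nat set" and N s :: nat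
  assumes A: "A \<subseteq> {..<N}"
  defines "Ss \<equiv> {X. X \<subseteq> {..<N} \<and> card X = s}"
  shows "card {S \<in> Kbip_V n0 n1 \<rightarrow>\<^sub>E Ss. Kbip_separates n0 n1 A S}
           = ((N choose s) - ((N - card A) choose s)) ^ n0 * ((N choose s) - (card A choose s)) ^ n1"
proof -
  have "{S \<in> Kbip_V n0 n1 \<rightarrow>\<^sub>E Ss. Kbip_separates n0 n1 A S}
      = PiE (Kbip_V n0 n1) (\<lambda>v. {X\<in>Ss. if isl v then X \<inter> A \<noteq> {} else \<not> X \<subseteq> A})"
    unfolding Kbip_separates_def Kbip_V_def set_eq_iff PiE_iff by auto
  then show ?thesis
    using A by (simp add: card_PiE finite_Kbip_V prod_Kbip_V Ss_def card_subsets_meeting card_subsets_not_subset)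
qed

lemma exists_Kbip_lists_without_separating_set:
  assumes "1 \<le> s" "s \<le> N"
    and H: "\<forall>a\<le>N. 2 * real N \<le> real n0 * real ((N - a) choose s) / real (N choose s) \<or>
                   2 * real N \<le> real n1 * real (a choose s) / real (N choose s)"
  shows "\<exists>S. (\<forall>v\<in>Kbip_V n0 n1. S v \<subseteq> {..<N} \<and> card (S v) = s) \<and> (\<nexists>A. Kbip_separates n0 n1 A S)"
proof -
  define F where "F = Kbip_V n0 n1 \<rightarrow>\<^sub>E {X. X \<subseteq> {..<N} \<and> card X = s}"
  define Sep where "Sep A = {S \<in> F. Kbip_separates n0 n1 A S}" for A :: "nat set"
  have "finite F"
    unfolding F_def Kbip_V_def by (intro finite_PiE) (auto intro: finite_subset[of _ "Pow {..<N}"])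
  have card_F: "card F = (N choose s) ^ n0 * (N choose s) ^ n1"
    unfolding F_def by (simp add: card_PiE finite_Kbip_V n_subsets card_Kbip_V power_add)
  have few: "real (card (Sep A)) * 2 ^ N < real (card F)" if A: "A \<subseteq> {..<N}" for A
  proof -
    have "card A \<le> N"
      using card_mono[OF _ A] by simp
    then show ?thesis
      using power_diff_product_times_2_power_less[of "(N - card A) choose s" "N choose s" "card A choose s"]
        H assms(1,2) card_F card_Kbip_lists_separated[OF A]
      by (simp add: Sep_def F_def binomial_right_mono)
  qed
  have "real (card (\<Union>A\<in>Pow {..<N}. Sep A)) \<le> (\<Sum>A\<in>Pow {..<N}. real (card (Sep A)))"
    by (metis card_UN_le finite_Pow_iff finite_lessThan of_nat_le_iff of_nat_sum)
  also have "\<dots> < (\<Sum>A\<in>Pow {..<N}. real (card F) / 2 ^ N)"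
    using few by (intro sum_strict_mono) (auto simp: field_simps)
  also have "\<dots> = real (card F)"
    by (simp add: card_Pow)
  moreover have "(\<Union>A\<in>Pow {..<N}. Sep A) \<subseteq> F"
    unfolding Sep_def by blast
  ultimately have "\<not> F \<subseteq> (\<Union>A\<in>Pow {..<N}. Sep A)"
    by (metis order_less_irrefl subset_antisym)
  then obtain S where S: "S \<in> F" "\<And>A. A \<subseteq> {..<N} \<Longrightarrow> \<not> Kbip_separates n0 n1 A S"
    unfolding Sep_def by blast
  have lists: "\<forall>v\<in>Kbip_V n0 n1. S v \<subseteq> {..<N} \<and> card (S v) = s"
    using S(1) unfolding F_def by auto
  then have "Kbip_separates n0 n1 (A \<inter> {..<N}) S" if "Kbip_separates n0 n1 A S" for A
    using that unfolding Kbip_separates_def Kbip_V_def by blast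
  then have "\<nexists>A. Kbip_separates n0 n1 A S"
    using S(2) by (meson inf_le2)
  with lists show ?thesis
    by (intro exI[of _ S] conjI)
qed

lemma not_choosable_Kbip_if_binomial:
  assumes "1 \<le> s" "s \<le> N"
    and "\<forall>a\<le>N. 2 * real N \<le> real n0 * real ((N - a) choose s) / real (N choose s) \<or>
                 2 * real N \<le> real n1 * real (a choose s) / real (N choose s)"
  shows "\<not> choosable (Kbip_V n0 n1) Kbip_E s"
proof
  assume "choosable (Kbip_V n0 n1) Kbip_E s"
  moreover obtain S where "\<forall>v\<in>Kbip_V n0 n1. S v \<subseteq> {..<N} \<and> card (S v) = s"
    "\<nexists>A. Kbip_separates n0 n1 A S"
    using exists_Kbip_lists_without_separating_set[OF assms] by blast
  ultimately show False
    unfolding choosable_iff_list_colouring Kbip_list_colouring_iff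
    by (metis finite_lessThan finite_subset order_refl)
qed

lemma not_choosable_KbipI:
  fixes p q :: real
  assumes s: "1 \<le> s" and pq: "0 < q" "q < p" "p < 1"
    and N: "2 * real s \<le> real N * (p - q)"
    and n0: "2 * real N \<le> real n0 * (1 - p) ^ s"
    and n1: "2 * real N \<le> real n1 * q ^ s"
  shows "\<not> choosable (Kbip_V n0 n1) Kbip_E s"
proof (rule not_choosable_Kbip_if_binomial)
  have "real N * (p - q) \<le> real N"
    using pq by (simp add: mult_left_le)
  with N s show "s \<le> N" and "1 \<le> s"
    by simp_all
  then have "0 < N"
    using s by simp
  show "\<forall>a\<le>N. 2 * real N \<le> real n0 * real ((N - a) choose s) / real (N choose s) \<or>
              2 * real N \<le> real n1 * real (a choose s) / real (N choose s)"
  proof (intro allI impI)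
    fix a assume "a \<le> N"
    show "2 * real N \<le> real n0 * real ((N - a) choose s) / real (N choose s) \<or>
          2 * real N \<le> real n1 * real (a choose s) / real (N choose s)"
    proof (cases "real N * q + real s \<le> real a")
      case True
      then have "q \<le> (real a - real s) / real N"
        using \<open>0 < N\<close> by (simp add: field_simps)
      then have "q ^ s \<le> real (a choose s) / real (N choose s)"
        using \<open>a \<le> N\<close> \<open>0 < N\<close> pq by (intro binomial_ratio_ge_power) auto
      then have "real n1 * q ^ s \<le> real n1 * (real (a choose s) / real (N choose s))"
        by (rule mult_left_mono) simp
      with n1 show ?thesis
        by simp
    next
      case False
      then have "1 - p \<le> (real (N - a) - real s) / real N"
        using N \<open>a \<le> N\<close> \<open>0 < N\<close> by (simp add: field_simps)
      then have "(1 - p) ^ s \<le> real ((N - a) choose s) / real (N choose s)"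
        using \<open>0 < N\<close> pq by (intro binomial_ratio_ge_power) auto
      then have "real n0 * (1 - p) ^ s \<le> real n0 * (real ((N - a) choose s) / real (N choose s))"
        by (rule mult_left_mono) simp
      with n0 show ?thesis
        by simp
    qed
  qed
qed

definition ch_Kbip_estimate :: "nat \<Rightarrow> nat \<Rightarrow> real" where
  "ch_Kbip_estimate n0 n1 =
     log 2 (real n1) / log 2 (root_x0 (log 2 (real n1) / log 2 (real n0)))"

lemma power_eq_2_powr: "0 < x \<Longrightarrow> x ^ n = 2 powr (log 2 x * real n)"
  by (simp add: powr_realpow flip: powr_powr)

lemma Kbip_estimate_parameters:
  fixes n0 n1 :: nat
  assumes "2 \<le> n0" "n0 \<le> n1"
  defines "L \<equiv> log 2 (real n1)" and "l \<equiv> log 2 (real n0)" and "x \<equiv> root_x0 (log 2 (real n1) / log 2 (real n0))"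
  shows "1 \<le> l" "l \<le> L" "2 \<le> x" "1 \<le> log 2 x" "log 2 x \<le> L / l" "x \<le> 3 * L"
    "ch_Kbip_estimate n0 n1 = L / log 2 x"
    "real n1 * (1 / x) ^ s = 2 powr (L - log 2 x * s)"
    "real n0 * (1 - 1 / x) ^ s = 2 powr (l - log 2 x * s * l / L)"
proof -
  show l: "1 \<le> l" "l \<le> L"
    using assms(1,2) by (simp_all add: l_def L_def)
  then have "1 \<le> L / l"
    by simp
  note x = root_x0_bounds[OF this, unfolded L_def l_def, folded x_def, folded L_def l_def]
  show x2: "2 \<le> x" "log 2 x \<le> L / l"
    using x by simp_all
  then show "1 \<le> log 2 x"
    by simp
  have "L / l \<le> L"
    using l by (simp add: divide_le_eq)
  then show "x \<le> 3 * L"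
    using x by simp
  show "ch_Kbip_estimate n0 n1 = L / log 2 x"
    by (simp add: ch_Kbip_estimate_def L_def l_def x_def)
  have "log 2 (1 / x) = - log 2 x"
    using x2 by (simp add: log_divide)
  then have "real n1 * (1 / x) ^ s = 2 powr L * 2 powr (- log 2 x * s)"
    using x2 assms(1,2) by (simp add: power_eq_2_powr L_def)
  then show "real n1 * (1 / x) ^ s = 2 powr (L - log 2 x * s)"
    by (simp flip: powr_add)
  have "log 2 (1 - 1 / x) = - log 2 x * l / L"
    using x2 l by (simp flip: x(2) add: log_powr)
  then have "real n0 * (1 - 1 / x) ^ s = 2 powr l * 2 powr (- log 2 x * l / L * s)"
    using x2 assms(1) by (simp add: power_eq_2_powr l_def)
  then show "real n0 * (1 - 1 / x) ^ s = 2 powr (l - log 2 x * s * l / L)"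
    by (simp add: mult_ac flip: powr_add)
qed

lemma Kbip_powers_above_estimate:
  fixes e :: real
  assumes n: "2 \<le> n0" "n0 \<le> n1" and e: "0 < e"
  defines "L \<equiv> log 2 (real n1)" and "l \<equiv> log 2 (real n0)"
    and "x \<equiv> root_x0 (log 2 (real n1) / log 2 (real n0))"
  assumes ys: "(1 + e) * L \<le> log 2 x * s"
  shows "real n0 * (1 - 1 / x) ^ s \<le> 2 powr (- e * l)" "real n1 * (1 / x) ^ s \<le> 2 powr (- e * l)"
proof -
  note par = Kbip_estimate_parameters[OF n, folded L_def l_def x_def]
  have "2 powr (l - log 2 x * s * l / L) \<le> 2 powr (- e * l)"
  proof (rule powr_mono)
    have "(1 + e) * L * l \<le> log 2 x * s * l"
      using ys par(1) by (intro mult_right_mono) auto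
    then have "(1 + e) * l \<le> log 2 x * s * l / L"
      using par(1,2) by (simp add: field_simps)
    then show "l - log 2 x * s * l / L \<le> - e * l"
      by (simp add: algebra_simps)
  qed simp
  then show "real n0 * (1 - 1 / x) ^ s \<le> 2 powr (- e * l)"
    unfolding par(9) .
  have "2 powr (L - log 2 x * s) \<le> 2 powr (- e * l)"
  proof (rule powr_mono)
    have "e * l \<le> e * L"
      using e par(2) by simp
    then show "L - log 2 x * s \<le> - e * l"
      using ys by (simp add: algebra_simps)
  qed simp
  then show "real n1 * (1 / x) ^ s \<le> 2 powr (- e * l)"
    unfolding par(8) .
qed

lemma choosable_Kbip_above_estimate:
  fixes e :: real
  assumes n: "2 \<le> n0" "n0 \<le> n1" and e: "0 < e" "1 < e * log 2 (real n0)"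
  shows "choosable (Kbip_V n0 n1) Kbip_E (nat \<lceil>(1 + e) * ch_Kbip_estimate n0 n1\<rceil>)"
proof -
  define L where "L = log 2 (real n1)"
  define l where "l = log 2 (real n0)"
  define x where "x = root_x0 (log 2 (real n1) / log 2 (real n0))"
  define s where "s = nat \<lceil>(1 + e) * ch_Kbip_estimate n0 n1\<rceil>"
  note par = Kbip_estimate_parameters[OF n, folded L_def l_def x_def]
  have "(1 + e) * L / log 2 x \<le> real s"
    unfolding s_def par(7) using real_nat_ceiling_ge by simp
  then have "(1 + e) * L \<le> log 2 x * real s"
    using par(4) by (simp add: field_simps)
  note powers = Kbip_powers_above_estimate[OF n e(1) this[unfolded L_def x_def], folded L_def l_def x_def]
  have "2 powr (- e * l) < 1 / 2"
    using powr_less_mono[of "- e * l" "- 1" 2] e by (simp add: l_def powr_minus_divide)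
  then show ?thesis
    unfolding s_def[symmetric] using par(3) powers
    by (intro choosable_KbipI[of "1 / x"]) auto
qed

lemma large_parameter_bounds:
  fixes e L :: real
  assumes e: "0 < e" and L: "14 / (1 - 2 powr (- e / 2)) \<le> L"
  shows "0 < 1 - 2 powr (- e / 2)" "1 - 2 powr (- e / 2) \<le> 1" "14 \<le> L" "3 \<le> log 2 L"
proof -
  have "2 powr (- e / 2) < 2 powr 0"
    using e by (intro powr_less_mono) auto
  then show d: "0 < 1 - 2 powr (- e / 2)" "1 - 2 powr (- e / 2) \<le> 1"
    by simp_all
  then have "14 \<le> 14 / (1 - 2 powr (- e / 2))"
    by (simp add: field_simps)
  with L show L14: "14 \<le> L"
    by simp
  have "log 2 8 \<le> log 2 L"
    using L14 by simp
  moreover have "log 2 (8::real) = 3"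
    using log_powr_cancel[of 2 3] by simp
  ultimately show "3 \<le> log 2 L"
    by linarith
qed

lemma twice_nat_ceiling_le_2_powr:
  fixes d L e l s x :: real
  assumes d: "0 < d" "d \<le> 1" and L: "14 / d \<le> L" and l: "6 * log 2 L \<le> e * l"
    and s: "0 \<le> s" "s \<le> L" and x: "0 \<le> x" "x \<le> 3 * L"
  shows "2 * real (nat \<lceil>2 * s * x / d\<rceil>) \<le> 2 powr (e * l / 2)"
proof -
  have "14 \<le> 14 / d"
    using d by (simp add: field_simps)
  with L have "1 \<le> L"
    by simp
  then have "1 \<le> L * L / d"
    using d by (simp add: field_simps) (metis mult_mono' dual_order.trans zero_le_one mult_1)
  have "real (nat \<lceil>2 * s * x / d\<rceil>) \<le> 2 * s * x / d + 1"
    using d s x by simp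
  also have "\<dots> \<le> 2 * L * (3 * L) / d + L * L / d"
    using d s x \<open>1 \<le> L * L / d\<close> by (intro add_mono divide_right_mono mult_mono) auto
  finally have "2 * real (nat \<lceil>2 * s * x / d\<rceil>) \<le> 2 * (2 * L * (3 * L) / d + L * L / d)"
    by simp
  also have "\<dots> = (14 / d) * L * L"
    by (simp add: field_simps)
  also have "\<dots> \<le> L * L * L"
    using L \<open>1 \<le> L\<close> by (intro mult_right_mono) auto
  also have "\<dots> = 2 powr (3 * log 2 L)"
    using \<open>1 \<le> L\<close> power_eq_2_powr[of L 3] by (simp add: power3_eq_cube mult.commute)
  also have "\<dots> \<le> 2 powr (e * l / 2)"
    using l by (intro powr_mono) auto
  finally show ?thesis .
qed

lemma Kbip_floor_estimate:
  fixes e :: real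
  assumes n: "2 \<le> n0" "n0 \<le> n1" and e: "0 < e" "e \<le> 1 / 2" "1 \<le> e * log 2 (real n0)"
  defines "L \<equiv> log 2 (real n1)" and "x \<equiv> root_x0 (log 2 (real n1) / log 2 (real n0))"
    and "s \<equiv> nat \<lfloor>(1 - e) * ch_Kbip_estimate n0 n1\<rfloor>"
  shows "1 \<le> s" "log 2 x * s \<le> (1 - e) * L" "real s \<le> L"
proof -
  define l where "l = log 2 (real n0)"
  note par = Kbip_estimate_parameters[OF n, folded L_def l_def x_def]
  have "0 \<le> (1 - e) * (L / log 2 x)"
    using e par(1,2,4) by simp
  then have "real s \<le> (1 - e) * L / log 2 x"
    unfolding s_def par(7) using of_nat_floor by fastforce
  then show sy: "log 2 x * s \<le> (1 - e) * L"
    using par(4) by (simp add: field_simps)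
  have "(1 - e) * l \<le> (1 - e) * (L / log 2 x)"
    using par(1,4,5) e by (intro mult_left_mono) (auto simp: field_simps)
  moreover have "1 \<le> (1 - e) * l"
    using e mult_right_mono[of e "1 - e" l] par(1) unfolding l_def by linarith
  ultimately show "1 \<le> s"
    unfolding s_def par(7) by linarith
  have "0 \<le> e * L"
    using e par(1,2) by simp
  then show "real s \<le> L"
    using sy mult_right_mono[OF par(4), of "real s"] by (simp add: algebra_simps)
qed

lemma Kbip_powers_below_estimate:
  fixes e :: real
  assumes n: "2 \<le> n0" "n0 \<le> n1" and e: "0 < e"
  defines "L \<equiv> log 2 (real n1)" and "l \<equiv> log 2 (real n0)"
    and "x \<equiv> root_x0 (log 2 (real n1) / log 2 (real n0))"
  assumes sy: "log 2 x * s \<le> (1 - e) * L" and sL: "real s \<le> L"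
  shows "2 powr (e * l / 2) \<le> real n0 * (1 - 1 / x) ^ s"
    "2 powr (e * l / 2) \<le> real n1 * (2 powr (- e / 2) / x) ^ s"
proof -
  note par = Kbip_estimate_parameters[OF n, folded L_def l_def x_def]
  have "2 powr (e * l / 2) \<le> 2 powr (l - log 2 x * s * l / L)"
  proof (rule powr_mono)
    have "log 2 x * s * l \<le> (1 - e) * L * l"
      using sy par(1) by (intro mult_right_mono) auto
    then have "log 2 x * s * l / L \<le> (1 - e) * l"
      using par(1,2) by (simp add: field_simps)
    moreover have "0 \<le> e * l"
      using e par(1) by simp
    ultimately show "e * l / 2 \<le> l - log 2 x * s * l / L"
      by (simp add: algebra_simps)
  qed simp
  then show "2 powr (e * l / 2) \<le> real n0 * (1 - 1 / x) ^ s"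
    unfolding par(9) .
  have "real n1 * (2 powr (- e / 2) / x) ^ s = real n1 * (1 / x) ^ s * (2 powr (- e / 2)) ^ s"
    by (simp add: power_mult_distrib power_divide)
  also have "\<dots> = 2 powr (L - log 2 x * s) * 2 powr (- e / 2 * s)"
    unfolding par(8) by (simp add: powr_power mult.commute)
  also have "\<dots> = 2 powr (L - log 2 x * s - e / 2 * s)"
    by (simp add: algebra_simps flip: powr_add)
  also have "\<dots> \<ge> 2 powr (e * l / 2)"
  proof (rule powr_mono)
    have "e * l \<le> e * L" "e / 2 * s \<le> e / 2 * L"
      using e par(2) sL by simp_all
    then show "e * l / 2 \<le> L - log 2 x * s - e / 2 * s"
      using sy by (simp add: algebra_simps)
  qed simp
  finally show "2 powr (e * l / 2) \<le> real n1 * (2 powr (- e / 2) / x) ^ s" .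
qed

lemma not_choosable_Kbip_below_estimate:
  fixes e :: real
  assumes n: "2 \<le> n0" "n0 \<le> n1" and e: "0 < e" "e \<le> 1 / 2"
    and large: "14 / (1 - 2 powr (- e / 2)) \<le> log 2 (real n1)"
    and polylog: "6 * log 2 (log 2 (real n1)) \<le> e * log 2 (real n0)"
  shows "\<not> choosable (Kbip_V n0 n1) Kbip_E (nat \<lfloor>(1 - e) * ch_Kbip_estimate n0 n1\<rfloor>)"
proof -
  define L where "L = log 2 (real n1)"
  define l where "l = log 2 (real n0)"
  define x where "x = root_x0 (log 2 (real n1) / log 2 (real n0))"
  define s where "s = nat \<lfloor>(1 - e) * ch_Kbip_estimate n0 n1\<rfloor>"
  define d where "d = 1 - 2 powr (- e / 2)"
  define p where "p = 1 / x"
  define q where "q = 2 powr (- e / 2) / x"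
  define N where "N = nat \<lceil>2 * real s * x / d\<rceil>"
  note par = Kbip_estimate_parameters[OF n, folded L_def l_def x_def]
  note bounds = large_parameter_bounds[OF e(1) large, folded L_def l_def d_def]
  have "1 \<le> e * l"
    using bounds(4) polylog unfolding L_def l_def by linarith
  note s = Kbip_floor_estimate[OF n e this[unfolded l_def], folded L_def x_def s_def]
  have pq: "0 < q" "q < p" "p < 1" and p_minus_q: "p - q = d / x"
    using par(3) bounds(1) unfolding p_def q_def d_def by (auto simp: field_simps)
  have "2 * real s = (2 * real s * x / d) * (p - q)"
    using par(3) bounds(1) unfolding p_minus_q by (simp add: field_simps)
  also have "\<dots> \<le> real N * (p - q)"
    unfolding N_def using pq by (intro mult_right_mono real_nat_ceiling_ge) auto
  finally have "2 * real s \<le> real N * (p - q)" .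
  moreover have "2 * real N \<le> 2 powr (e * l / 2)"
    unfolding N_def using bounds large polylog s(3) par(3,6)
    by (intro twice_nat_ceiling_le_2_powr) (auto simp: d_def L_def l_def)
  moreover note Kbip_powers_below_estimate[OF n e(1) s(2,3)[unfolded L_def x_def], folded L_def l_def x_def]
  ultimately show ?thesis
    unfolding s_def[symmetric] using s(1) pq
    by (intro not_choosable_KbipI[of s q p N]) (auto simp: p_def q_def)
qed

lemma ch_Kbip_ratio_bound:
  fixes e :: real
  assumes n: "2 \<le> n0" "n0 \<le> n1" and e: "0 < e" "e \<le> 1 / 2"
    and large: "14 / (1 - 2 powr (- e / 2)) \<le> log 2 (real n1)"
    and polylog: "6 * log 2 (log 2 (real n1)) \<le> e * log 2 (real n0)"
  shows "\<bar>real (ch_Kbip n0 n1) / ch_Kbip_estimate n0 n1 - 1\<bar> \<le> 2 * e"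
proof -
  define E where "E = ch_Kbip_estimate n0 n1"
  define c where "c = ch_Kbip n0 n1"
  note par = Kbip_estimate_parameters[OF n]
  have el: "18 \<le> e * log 2 (real n0)"
    using large_parameter_bounds(4)[OF e(1) large] polylog by linarith
  have "log 2 (real n0) \<le> E"
    using par(1,2,4,5) unfolding E_def par(7) by (simp add: field_simps)
  then have E0: "0 < E"
    using par(1) by linarith
  have "18 \<le> e * E"
    using el mult_left_mono[OF \<open>log 2 (real n0) \<le> E\<close>, of e] e(1) by linarith
  then have E: "0 < E" "1 / E \<le> e"
    using E0 by (simp_all add: field_simps)
  have "1 < e * log 2 (real n0)"
    using el by simp
  then have "c \<le> nat \<lceil>(1 + e) * E\<rceil>"
    unfolding c_def E_def ch_Kbip_def
    by (intro choice_number_le choosable_Kbip_above_estimate n e(1))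
  moreover have "0 \<le> (1 + e) * E"
    using E e by simp
  ultimately have upper: "real c \<le> (1 + e) * E + 1"
    using ceiling_correct[of "(1 + e) * E"] by linarith
  have "nat \<lfloor>(1 - e) * E\<rfloor> < c"
    unfolding c_def E_def ch_Kbip_def
    using not_choosable_Kbip_below_estimate[OF n e large polylog]
      choosable_Kbip_above_estimate[OF n e(1) \<open>1 < e * log 2 (real n0)\<close>]
    by (rule less_choice_number)
  then have lower: "(1 - e) * E < real c"
    by linarith
  have "1 - e < real c / E" "real c / E \<le> 1 + e + 1 / E"
    using upper lower E by (simp_all add: field_simps)
  with E e show ?thesis
    unfolding c_def E_def by linarith
qed

lemma eventually_log_ge:
  fixes f :: "'a \<Rightarrow> nat"
  assumes "filterlim f at_top F"
  shows "eventually (\<lambda>m. c \<le> log 2 (real (f m))) F"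
proof -
  have "eventually (\<lambda>m. nat \<lceil>2 powr c\<rceil> \<le> f m) F"
    using assms filterlim_at_top by blast
  then show ?thesis
  proof eventually_elim
    case (elim m)
    then have "2 powr c \<le> real (f m)"
      by linarith
    moreover have "0 < real (f m)"
      using calculation powr_gt_zero[of 2 c] by linarith
    ultimately show ?case
      by (subst le_log_iff) auto
  qed
qed

theorem theorem1:
  fixes n0 n1 :: "nat \<Rightarrow> nat"
  assumes "\<forall>m. 2 \<le> n0 m \<and> n0 m \<le> n1 m"
    and "filterlim n1 at_top sequentially"
    and "filterlim (\<lambda>m. log 2 (real (n0 m)) / log 2 (log 2 (real (n1 m)))) at_top sequentially"
  shows "(\<lambda>m. real (ch_Kbip (n0 m) (n1 m)) /
              (log 2 (real (n1 m)) /
               log 2 (root_x0 (log 2 (real (n1 m)) / log 2 (real (n0 m))))))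
         \<longlonglongrightarrow> 1"
  unfolding ch_Kbip_estimate_def[symmetric] tendsto_iff dist_real_def
proof (intro allI impI)
  fix r :: real
  assume "0 < r"
  define e where "e = min (1 / 2) (r / 3)"
  have e: "0 < e" "e \<le> 1 / 2" "2 * e < r"
    using \<open>0 < r\<close> by (auto simp: e_def)
  have "eventually (\<lambda>m. 14 / (1 - 2 powr (- e / 2)) \<le> log 2 (real (n1 m))) sequentially"
    using assms(2) by (rule eventually_log_ge)
  moreover have "eventually (\<lambda>m. 6 / e \<le> log 2 (real (n0 m)) / log 2 (log 2 (real (n1 m)))) sequentially"
    using assms(3) by (simp add: filterlim_at_top)
  ultimately show "eventually (\<lambda>m. \<bar>real (ch_Kbip (n0 m) (n1 m)) / ch_Kbip_estimate (n0 m) (n1 m) - 1\<bar> < r)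
      sequentially"
  proof eventually_elim
    case (elim m)
    have "0 < log 2 (log 2 (real (n1 m)))"
      using large_parameter_bounds(3)[OF e(1) elim(1)] by simp
    then have "6 * log 2 (log 2 (real (n1 m))) \<le> e * log 2 (real (n0 m))"
      using elim(2) e(1) by (simp add: field_simps)
    then show ?case
      using ch_Kbip_ratio_bound[OF _ _ e(1,2) elim(1)] assms(1) e(3) by fastforce
  qed
qed

end
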